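(* Let $n,d\ge 1$ and let $$T=\begin{pmatrix} B_{11} & \cdots & B_{1n}\\ \vdots & \ddots & \vdots\\ B_{n1} & \cdots & B_{nn}\end{pmatrix}=\sum_{i,j=1}^n E_{ij}\otimes B_{ij}\in M(nd,\mathbb{C}),$$ where $E_{ij}$ are the standard matrix units of $M(n,\mathbb{C})$, and suppose that all blocks $B_{ij}\in M(d,\mathbb{C})$ ($i,j=1,\ldots,n$) are normal and pairwise commute. Let $\{u_k\}_{k=1}^d$ be a common orthonormal basis of eigenvectors of all the $B_{ij}$, with $B_{ij}u_k=\beta_k^{ij}u_k$ for $i,j=1,\ldots,n$, $k=1,\ldots,d$, and for each $k$ let $M(\beta_k^{ij})=(\beta_k^{ij})_{i,j=1}^n\in M(n,\mathbb{C})$, so that $T=\sum_{k=1}^d M(\beta_k^{ij})\otimes u_ku_k^{\dagger}$. Then: (1) $T$ is separable if and only if $T$ is positive semidefinite; (2) $T$ is positive semidefinite if and only if all $d$ matrices $M(\beta_k^{ij})$, $k=1,\ldots,d$, are positive semidefinite; (3) if $T$ is separable, then $$T=\sum_{k=1}^d\sum_{j=0}^{n-1}\lambda_j^k\, v_j^k v_j^{k\dagger}\otimes u_ku_k^{\dagger},$$ where $\{\lambda_j^k\}_{j=0}^{n-1}$ and $\{v_j^k\}_{j=0}^{n-1}$ are the eigenvalues and a corresponding orthonormal basis of eigenvectors of the (positive semidefinite, hence Hermitian) matrix $M(\beta_k^{ij})$; this is a separable decomposition.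
   Context: The tensor product of matrices is the Kronecker product, so $A\otimes B$ for $A\in M(n,\mathbb{C})$, $B\in M(d,\mathbb{C})$ is the $nd\times nd$ block matrix whose $(i,j)$ block is $a_{ij}B$. A matrix $T\in M(nd,\mathbb{C})\cong M(n,\mathbb{C})\otimes M(d,\mathbb{C})$ is called separable if it is positive semidefinite and can be written as a finite sum $T=\sum_i \rho_i\otimes\sigma_i$ with $\rho_i\in M(n,\mathbb{C})$ and $\sigma_i\in M(d,\mathbb{C})$ positive semidefinite (states need not be normalized). *)

theory Defs
  imports "Jordan_Normal_Form.Matrix"
begin

definition kron :: "complex mat \<Rightarrow> complex mat \<Rightarrow> complex mat" where
  "kron A B = mat (dim_row A * dim_row B) (dim_col A * dim_col B)
     (\<lambda>(i,j). A $$ (i div dim_row B, j div dim_col B) * B $$ (i mod dim_row B, j mod dim_col B))"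

definition adj :: "complex mat \<Rightarrow> complex mat" where
  "adj A = mat (dim_col A) (dim_row A) (\<lambda>(i,j). cnj (A $$ (j,i)))"

definition cinner :: "complex vec \<Rightarrow> complex vec \<Rightarrow> complex" where
  "cinner v w = (\<Sum>i<dim_vec v. cnj (v $ i) * w $ i)"

definition outer :: "complex vec \<Rightarrow> complex mat" where
  "outer v = mat (dim_vec v) (dim_vec v) (\<lambda>(i,j). v $ i * cnj (v $ j))"

definition psd :: "complex mat \<Rightarrow> bool" where
  "psd A \<longleftrightarrow> dim_row A = dim_col A \<and>
     (\<forall>v \<in> carrier_vec (dim_row A). Im (cinner v (A *\<^sub>v v)) = 0 \<and> Re (cinner v (A *\<^sub>v v)) \<ge> 0)"

definition normal_mat :: "complex mat \<Rightarrow> bool" where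
  "normal_mat A \<longleftrightarrow> dim_row A = dim_col A \<and> A * adj A = adj A * A"

definition msum :: "nat \<Rightarrow> nat \<Rightarrow> ('i \<Rightarrow> complex mat) \<Rightarrow> 'i set \<Rightarrow> complex mat" where
  "msum r c f I = mat r c (\<lambda>(a,b). \<Sum>i\<in>I. f i $$ (a,b))"

definition separable :: "nat \<Rightarrow> nat \<Rightarrow> complex mat \<Rightarrow> bool" where
  "separable n d T \<longleftrightarrow> psd T \<and>
     (\<exists>m::nat. \<exists>\<rho> \<sigma>. (\<forall>i<m. \<rho> i \<in> carrier_mat n n \<and> psd (\<rho> i) \<and> \<sigma> i \<in> carrier_mat d d \<and> psd (\<sigma> i))
        \<and> T = msum (n*d) (n*d) (\<lambda>i. kron (\<rho> i) (\<sigma> i)) {..<m})"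

(* the (i,j) d x d block of T, i.e. B_ij with T = \<Sum> E_ij \<otimes> B_ij *)
definition blk :: "nat \<Rightarrow> complex mat \<Rightarrow> nat \<Rightarrow> nat \<Rightarrow> complex mat" where
  "blk d T i j = mat d d (\<lambda>(a,b). T $$ (i*d + a, j*d + b))"

definition orthonormal_basis :: "nat \<Rightarrow> (nat \<Rightarrow> complex vec) \<Rightarrow> bool" where
  "orthonormal_basis m u \<longleftrightarrow> (\<forall>k<m. u k \<in> carrier_vec m) \<and>
     (\<forall>k<m. \<forall>l<m. cinner (u k) (u l) = (if k = l then 1 else 0))"

end

theory Submission
  imports Defs "Jordan_Normal_Form.Determinant"
begin

text \<open>
  A common orthonormal eigenbasis u of the blocks writes every block as
  B_ij = \<Sum>_k \<beta>_k^ij u_k u_k^\<dagger>, hence T = \<Sum>_k M_k \<otimes> u_k u_k^\<dagger>. For a vector w the quadratic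
  form then splits as <w, T w> = \<Sum>_k <x_k, M_k x_k> with x_k = (1 \<otimes> u_k^\<dagger>) w, and testing on
  w = y \<otimes> u_k isolates a single summand; so T is psd iff every M_k is. In that case the
  spectral decompositions of the M_k, whose eigenvalues are then nonnegative, turn the sum
  into a separable decomposition of T. Normality and commutativity of the blocks only
  guarantee that u exists, and u is given explicitly.
\<close>

definition tensor_vec :: "complex vec \<Rightarrow> complex vec \<Rightarrow> complex vec" where
  "tensor_vec y u = vec (dim_vec y * dim_vec u) (\<lambda>p. y $ (p div dim_vec u) * u $ (p mod dim_vec u))"

definition partial_cinner :: "nat \<Rightarrow> complex vec \<Rightarrow> complex vec \<Rightarrow> complex vec" where
  "partial_cinner n u w = vec n (\<lambda>j. \<Sum>b<dim_vec u. cnj (u $ b) * w $ (j * dim_vec u + b))"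

lemma tensor_vec_carrier: "y \<in> carrier_vec n \<Longrightarrow> u \<in> carrier_vec d \<Longrightarrow> tensor_vec y u \<in> carrier_vec (n * d)"
  by (simp add: tensor_vec_def)

lemma sum_lessThan_mult:
  "(\<Sum>p<n * d. f p) = (\<Sum>i<n. \<Sum>a<d. f (i * d + a) :: 'a :: comm_monoid_add)" for n d :: nat
proof (induction n)
  case 0
  then show ?case by simp
next
  case (Suc n)
  have "{..<Suc n * d} = {..<n * d} \<union> {n * d..<n * d + d}" by auto
  then have "(\<Sum>p<Suc n * d. f p) = (\<Sum>p<n * d. f p) + (\<Sum>p\<in>{n * d..<n * d + d}. f p)"
    by (simp add: sum.union_disjoint ivl_disj_int)
  also have "(\<Sum>p\<in>{n * d..<n * d + d}. f p) = (\<Sum>a<d. f (n * d + a))"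
    using sum.shift_bounds_nat_ivl[of f 0 "n * d" d] by (simp add: add.commute lessThan_atLeast0)
  finally show ?case using Suc by simp
qed

lemma index_lt_mult: "i < n \<Longrightarrow> a < d \<Longrightarrow> i * d + a < n * (d :: nat)"
proof -
  assume "i < n" "a < d"
  then have "i * d + a < Suc i * d" by simp
  also have "\<dots> \<le> n * d" using \<open>i < n\<close> by (intro mult_right_mono) auto
  finally show ?thesis .
qed

lemma index_mult_decomp:
  assumes "p < n * (d :: nat)"
  shows "p div d < n" "p mod d < d" "p = p div d * d + p mod d"
proof -
  have "d > 0" using assms by (cases d) auto
  then show "p div d < n" "p mod d < d" "p = p div d * d + p mod d"
    using assms by (auto simp: less_mult_imp_div_less)
qed

lemma mult_mat_vec_nth:
  "A \<in> carrier_mat m k \<Longrightarrow> w \<in> carrier_vec k \<Longrightarrow> i < m \<Longrightarrow> (A *\<^sub>v w) $ i = (\<Sum>j<k. A $$ (i, j) * w $ j)"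
  by (simp add: scalar_prod_def row_def lessThan_atLeast0)

lemma cinner_mult_mat_vec:
  "A \<in> carrier_mat m m \<Longrightarrow> w \<in> carrier_vec m \<Longrightarrow>
     cinner w (A *\<^sub>v w) = (\<Sum>p<m. \<Sum>q<m. cnj (w $ p) * A $$ (p, q) * w $ q)"
  unfolding cinner_def
  by (intro sum.cong) (auto simp: scalar_prod_def row_def lessThan_atLeast0 sum_distrib_left mult.assoc)

lemma outer_carrier: "v \<in> carrier_vec d \<Longrightarrow> outer v \<in> carrier_mat d d"
  by (simp add: outer_def)

lemma dim_outer [simp]: "dim_row (outer v) = dim_vec v" "dim_col (outer v) = dim_vec v"
  by (simp_all add: outer_def)

lemma index_outer [simp]:
  "a < dim_vec v \<Longrightarrow> b < dim_vec v \<Longrightarrow> outer v $$ (a, b) = v $ a * cnj (v $ b)"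
  by (simp add: outer_def)

lemma orthonormal_basis_carrier: "orthonormal_basis m u \<Longrightarrow> k < m \<Longrightarrow> u k \<in> carrier_vec m"
  unfolding orthonormal_basis_def by blast

text \<open>Completeness: the columns u_k form a unitary matrix U, and U^\<dagger> U = 1 forces U U^\<dagger> = 1.\<close>

lemma orthonormal_basis_complete:
  assumes u: "orthonormal_basis m u" and "a < m" "b < m"
  shows "(\<Sum>k<m. u k $ a * cnj (u k $ b)) = (if a = b then 1 else 0)"
proof -
  define U where "U = mat m m (\<lambda>(a, k). u k $ a)"
  have U: "U \<in> carrier_mat m m" "adj U \<in> carrier_mat m m" by (auto simp: U_def adj_def)
  have "adj U * U = 1\<^sub>m m"
  proof (rule eq_matI)
    fix i j assume ij: "i < dim_row (1\<^sub>m m)" "j < dim_col (1\<^sub>m m)"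
    then have "(adj U * U) $$ (i, j) = cinner (u i) (u j)"
      using orthonormal_basis_carrier[OF u, of i]
      by (simp add: U_def adj_def cinner_def scalar_prod_def row_def col_def lessThan_atLeast0)
    also have "\<dots> = 1\<^sub>m m $$ (i, j)" using u ij unfolding orthonormal_basis_def by auto
    finally show "(adj U * U) $$ (i, j) = 1\<^sub>m m $$ (i, j)" .
  qed (auto simp: U_def adj_def)
  then have "U * adj U = 1\<^sub>m m" using mat_mult_left_right_inverse U by blast
  then have "(U * adj U) $$ (a, b) = (if a = b then 1 else 0)" using assms by simp
  moreover have "(U * adj U) $$ (a, b) = (\<Sum>k<m. u k $ a * cnj (u k $ b))"
    using assms by (simp add: U_def adj_def scalar_prod_def row_def col_def lessThan_atLeast0)
  ultimately show ?thesis by simp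
qed

lemma spectral_decomposition:
  assumes A: "A \<in> carrier_mat m m" and u: "orthonormal_basis m u"
    and eig: "\<forall>k<m. A *\<^sub>v u k = c k \<cdot>\<^sub>v u k"
  shows "A = msum m m (\<lambda>k. c k \<cdot>\<^sub>m outer (u k)) {..<m}"
proof (rule eq_matI)
  fix a b assume "a < dim_row (msum m m (\<lambda>k. c k \<cdot>\<^sub>m outer (u k)) {..<m})"
    "b < dim_col (msum m m (\<lambda>k. c k \<cdot>\<^sub>m outer (u k)) {..<m})"
  then have ab: "a < m" "b < m" by (auto simp: msum_def)
  have uc: "\<And>k. k < m \<Longrightarrow> u k \<in> carrier_vec m" using orthonormal_basis_carrier[OF u] .
  have "A $$ (a, b) = (\<Sum>l<m. A $$ (a, l) * (\<Sum>k<m. u k $ l * cnj (u k $ b)))"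
    using ab by (simp add: orthonormal_basis_complete[OF u] if_distrib cong: if_cong)
  also have "\<dots> = (\<Sum>k<m. (A *\<^sub>v u k) $ a * cnj (u k $ b))"
    using ab by (simp add: mult_mat_vec_nth[OF A uc] sum_distrib_left sum_distrib_right mult.assoc)
      (rule sum.swap)
  also have "\<dots> = (\<Sum>k<m. (c k \<cdot>\<^sub>m outer (u k)) $$ (a, b))"
  proof (intro sum.cong refl)
    fix k assume "k \<in> {..<m}"
    then have "u k \<in> carrier_vec m" "A *\<^sub>v u k = c k \<cdot>\<^sub>v u k" using uc eig by auto
    then show "(A *\<^sub>v u k) $ a * cnj (u k $ b) = (c k \<cdot>\<^sub>m outer (u k)) $$ (a, b)"
      using ab outer_carrier by (simp add: outer_def)
  qed
  finally show "A $$ (a, b) = msum m m (\<lambda>k. c k \<cdot>\<^sub>m outer (u k)) {..<m} $$ (a, b)"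
    using ab by (simp add: msum_def)
qed (use A in \<open>auto simp: msum_def\<close>)

lemma kron_carrier:
  "A \<in> carrier_mat n n' \<Longrightarrow> B \<in> carrier_mat d d' \<Longrightarrow> kron A B \<in> carrier_mat (n * d) (n' * d')"
  by (simp add: kron_def)

lemma index_kron:
  assumes "A \<in> carrier_mat n n'" "B \<in> carrier_mat d d'" "i < n" "j < n'" "a < d" "b < d'"
  shows "kron A B $$ (i * d + a, j * d' + b) = A $$ (i, j) * B $$ (a, b)"
  using assms index_lt_mult[of i n a d] index_lt_mult[of j n' b d'] by (simp add: kron_def)

lemma kron_msum_left:
  assumes f: "\<forall>j\<in>J. f j \<in> carrier_mat n n" and B: "B \<in> carrier_mat d d"
  shows "kron (msum n n f J) B = msum (n * d) (n * d) (\<lambda>j. kron (f j) B) J"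
proof (rule eq_matI)
  fix p q assume "p < dim_row (msum (n * d) (n * d) (\<lambda>j. kron (f j) B) J)"
    "q < dim_col (msum (n * d) (n * d) (\<lambda>j. kron (f j) B) J)"
  then have p: "p < n * d" and q: "q < n * d" by (auto simp: msum_def)
  note ip = index_mult_decomp[OF p] and iq = index_mult_decomp[OF q]
  have "kron (msum n n f J) B $$ (p, q) = msum n n f J $$ (p div d, q div d) * B $$ (p mod d, q mod d)"
    using index_kron[of _ n n B d d, OF _ B ip(1) iq(1) ip(2) iq(2)] ip(3) iq(3)
    by (simp add: msum_def)
  also have "\<dots> = (\<Sum>j\<in>J. kron (f j) B $$ (p, q))"
    using index_kron[of _ n n B d d, OF _ B ip(1) iq(1) ip(2) iq(2)] ip iq f
    by (simp add: msum_def sum_distrib_right)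
  finally show "kron (msum n n f J) B $$ (p, q) = msum (n * d) (n * d) (\<lambda>j. kron (f j) B) J $$ (p, q)"
    using p q by (simp add: msum_def)
qed (use B in \<open>auto simp: msum_def kron_def\<close>)

lemma msum_msum: "msum r c (\<lambda>k. msum r c (g k) J) I = msum r c (case_prod g) (I \<times> J)"
  by (rule eq_matI) (auto simp: msum_def sum.cartesian_product case_prod_beta)

lemma msum_cong: "(\<And>k. k \<in> I \<Longrightarrow> f k = g k) \<Longrightarrow> msum r c f I = msum r c g I"
  unfolding msum_def by (metis (no_types, lifting) sum.cong)

lemma cinner_msum:
  assumes "finite I" and f: "\<forall>k\<in>I. f k \<in> carrier_mat r r" and w: "w \<in> carrier_vec r"
  shows "cinner w (msum r r f I *\<^sub>v w) = (\<Sum>k\<in>I. cinner w (f k *\<^sub>v w))"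
proof -
  have "cinner w (msum r r f I *\<^sub>v w) = (\<Sum>p<r. \<Sum>q<r. \<Sum>k\<in>I. cnj (w $ p) * f k $$ (p, q) * w $ q)"
    using w cinner_mult_mat_vec[of "msum r r f I" r w]
    by (simp add: msum_def sum_distrib_left sum_distrib_right mult.assoc)
  also have "\<dots> = (\<Sum>p<r. \<Sum>k\<in>I. \<Sum>q<r. cnj (w $ p) * f k $$ (p, q) * w $ q)"
    by (intro sum.cong refl) (rule sum.swap)
  also have "\<dots> = (\<Sum>k\<in>I. \<Sum>p<r. \<Sum>q<r. cnj (w $ p) * f k $$ (p, q) * w $ q)"
    by (rule sum.swap)
  also have "\<dots> = (\<Sum>k\<in>I. cinner w (f k *\<^sub>v w))"
  proof (rule sum.cong[OF refl])
    fix k assume "k \<in> I"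
    then show "(\<Sum>p<r. \<Sum>q<r. cnj (w $ p) * f k $$ (p, q) * w $ q) = cinner w (f k *\<^sub>v w)"
      using cinner_mult_mat_vec[of "f k" r w] f w by simp
  qed
  finally show ?thesis .
qed

lemma cinner_kron_outer:
  assumes M: "M \<in> carrier_mat n n" and u: "u \<in> carrier_vec d" and w: "w \<in> carrier_vec (n * d)"
  shows "cinner w (kron M (outer u) *\<^sub>v w) = cinner (partial_cinner n u w) (M *\<^sub>v partial_cinner n u w)"
proof -
  have K: "kron M (outer u) \<in> carrier_mat (n * d) (n * d)"
    using kron_carrier[OF M outer_carrier[OF u]] .
  have "cinner w (kron M (outer u) *\<^sub>v w) = (\<Sum>i<n. \<Sum>a<d. \<Sum>j<n. \<Sum>b<d.
      cnj (w $ (i * d + a)) * (M $$ (i, j) * (u $ a * cnj (u $ b))) * w $ (j * d + b))"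
    using index_kron[OF M outer_carrier[OF u]] u
    by (simp add: cinner_mult_mat_vec[OF K w] sum_lessThan_mult)
  also have "\<dots> = (\<Sum>i<n. \<Sum>j<n. \<Sum>a<d. \<Sum>b<d.
      cnj (w $ (i * d + a)) * (M $$ (i, j) * (u $ a * cnj (u $ b))) * w $ (j * d + b))"
    by (rule sum.cong[OF refl], rule sum.swap)
  also have "\<dots> = cinner (partial_cinner n u w) (M *\<^sub>v partial_cinner n u w)"
    using u by (simp add: cinner_mult_mat_vec[OF M] partial_cinner_def sum_distrib_left sum_distrib_right mult_ac)
  finally show ?thesis .
qed

lemma partial_cinner_tensor_vec:
  assumes "y \<in> carrier_vec n" "u \<in> carrier_vec d" "u' \<in> carrier_vec d"
  shows "partial_cinner n u' (tensor_vec y u) = cinner u' u \<cdot>\<^sub>v y"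
  using assms index_lt_mult[of _ n _ d]
  by (intro eq_vecI) (auto simp: partial_cinner_def tensor_vec_def cinner_def sum_distrib_left mult_ac)

lemma cinner_kron_outer_sum:
  assumes u: "\<forall>k<d. u k \<in> carrier_vec d" and M: "\<forall>k<d. M k \<in> carrier_mat n n"
    and w: "w \<in> carrier_vec (n * d)"
  shows "cinner w (msum (n * d) (n * d) (\<lambda>k. kron (M k) (outer (u k))) {..<d} *\<^sub>v w) =
    (\<Sum>k<d. cinner (partial_cinner n (u k) w) (M k *\<^sub>v partial_cinner n (u k) w))"
  using M u kron_carrier[OF _ outer_carrier, of _ n n]
  by (simp add: cinner_msum[OF _ _ w] cinner_kron_outer[OF _ _ w])

lemma cinner_kron_outer_sum_tensor_vec:
  assumes u: "orthonormal_basis d u" and M: "\<forall>k<d. M k \<in> carrier_mat n n"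
    and y: "y \<in> carrier_vec n" and k: "k < d"
  shows "cinner (tensor_vec y (u k)) (msum (n * d) (n * d) (\<lambda>k. kron (M k) (outer (u k))) {..<d}
      *\<^sub>v tensor_vec y (u k)) = cinner y (M k *\<^sub>v y)"
proof -
  have uc: "\<forall>k<d. u k \<in> carrier_vec d" using orthonormal_basis_carrier[OF u] by blast
  have w: "tensor_vec y (u k) \<in> carrier_vec (n * d)" using tensor_vec_carrier y uc k by blast
  have "partial_cinner n (u l) (tensor_vec y (u k)) = (if l = k then y else 0\<^sub>v n)" if "l < d" for l
    using partial_cinner_tensor_vec[OF y, of "u k" d "u l"] u uc k that y
    unfolding orthonormal_basis_def by auto
  then have "(\<Sum>l<d. cinner (partial_cinner n (u l) (tensor_vec y (u k))) (M l *\<^sub>v partial_cinner n (u l) (tensor_vec y (u k))))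
      = (\<Sum>l<d. if l = k then cinner y (M k *\<^sub>v y) else 0)"
    by (intro sum.cong refl) (simp add: cinner_def)
  then show ?thesis using k by (simp add: cinner_kron_outer_sum[OF uc M w])
qed

lemma psd_kron_outer_sum_iff:
  assumes u: "orthonormal_basis d u" and M: "\<forall>k<d. M k \<in> carrier_mat n n"
  shows "psd (msum (n * d) (n * d) (\<lambda>k. kron (M k) (outer (u k))) {..<d}) \<longleftrightarrow> (\<forall>k<d. psd (M k))"
    (is "psd ?T \<longleftrightarrow> _")
proof
  assume psdT: "psd ?T"
  show "\<forall>k<d. psd (M k)"
  proof (intro allI impI)
    fix k assume k: "k < d"
    have Mk: "M k \<in> carrier_mat n n" using M k by simp
    have "Im (cinner y (M k *\<^sub>v y)) = 0 \<and> 0 \<le> Re (cinner y (M k *\<^sub>v y))" if y: "y \<in> carrier_vec n" for y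
    proof -
      have "tensor_vec y (u k) \<in> carrier_vec (dim_row ?T)"
        using tensor_vec_carrier[OF y orthonormal_basis_carrier[OF u k]] by (simp add: msum_def)
      then show ?thesis using psdT cinner_kron_outer_sum_tensor_vec[OF u M y k] unfolding psd_def by metis
    qed
    then show "psd (M k)" using Mk unfolding psd_def by simp
  qed
next
  assume psdM: "\<forall>k<d. psd (M k)"
  have uc: "\<forall>k<d. u k \<in> carrier_vec d" using orthonormal_basis_carrier[OF u] by blast
  have "Im (cinner w (?T *\<^sub>v w)) = 0 \<and> 0 \<le> Re (cinner w (?T *\<^sub>v w))" if w: "w \<in> carrier_vec (n * d)" for w
  proof -
    have "Im (cinner x (M k *\<^sub>v x)) = 0 \<and> 0 \<le> Re (cinner x (M k *\<^sub>v x))"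
      if "k < d" and "x = partial_cinner n (u k) w" for k x
    proof -
      have "x \<in> carrier_vec (dim_row (M k))" using M that by (auto simp: partial_cinner_def)
      then show ?thesis using psdM \<open>k < d\<close> unfolding psd_def by blast
    qed
    then show ?thesis
      unfolding cinner_kron_outer_sum[OF uc M w] by (auto intro: sum_nonneg)
  qed
  then show "psd ?T" unfolding psd_def by (simp add: msum_def)
qed

lemma psd_smult_outer:
  assumes "Im r = 0" "Re r \<ge> 0"
  shows "psd (r \<cdot>\<^sub>m outer v)"
  unfolding psd_def
proof (intro conjI ballI)
  show "dim_row (r \<cdot>\<^sub>m outer v) = dim_col (r \<cdot>\<^sub>m outer v)" by (simp add: outer_def)
  fix w :: "complex vec" assume "w \<in> carrier_vec (dim_row (r \<cdot>\<^sub>m outer v))"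
  then have w: "w \<in> carrier_vec (dim_vec v)" by (simp add: outer_def)
  have C: "r \<cdot>\<^sub>m outer v \<in> carrier_mat (dim_vec v) (dim_vec v)" by (simp add: outer_def)
  have "cinner w ((r \<cdot>\<^sub>m outer v) *\<^sub>v w) =
      r * (\<Sum>p<dim_vec v. cnj (w $ p) * v $ p * (\<Sum>q<dim_vec v. cnj (v $ q) * w $ q))"
    by (simp add: cinner_mult_mat_vec[OF C w] sum_distrib_left mult_ac)
  also have "\<dots> = r * (cinner v w * cnj (cinner v w))"
    using w by (simp add: cinner_def sum_distrib_right mult_ac)
  also have "\<dots> = r * of_real ((cmod (cinner v w))\<^sup>2)" by (metis complex_norm_square)
  finally show "Im (cinner w ((r \<cdot>\<^sub>m outer v) *\<^sub>v w)) = 0" "Re (cinner w ((r \<cdot>\<^sub>m outer v) *\<^sub>v w)) \<ge> 0"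
    using assms by simp_all
qed

lemma psd_outer: "psd (outer v)"
proof -
  have "1 \<cdot>\<^sub>m outer v = outer v" by (rule eq_matI) auto
  then show ?thesis using psd_smult_outer[of 1 v] by simp
qed

lemma psd_eigenvalue_nonneg:
  assumes "psd A" "A \<in> carrier_mat m m" "v \<in> carrier_vec m" "A *\<^sub>v v = c \<cdot>\<^sub>v v" "cinner v v = 1"
  shows "Im c = 0 \<and> Re c \<ge> 0"
proof -
  have "cinner v (A *\<^sub>v v) = c * cinner v v"
    using assms(4) by (simp add: cinner_def sum_distrib_left mult_ac)
  then have "cinner v (A *\<^sub>v v) = c" using assms(5) by simp
  then show ?thesis using assms(1-3) unfolding psd_def by (metis carrier_matD(1))
qed

lemma kron_outer_sum_spectral_refinement:
  assumes M: "\<forall>k<d. M k \<in> carrier_mat n n" and u: "\<forall>k<d. u k \<in> carrier_vec d"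
    and v: "\<forall>k<d. orthonormal_basis n (v k) \<and> (\<forall>j<n. M k *\<^sub>v v k j = lam k j \<cdot>\<^sub>v v k j)"
  shows "msum (n * d) (n * d) (\<lambda>k. kron (M k) (outer (u k))) {..<d} =
    msum (n * d) (n * d) (\<lambda>(k, j). kron (lam k j \<cdot>\<^sub>m outer (v k j)) (outer (u k))) ({..<d} \<times> {..<n})"
  unfolding msum_msum[symmetric]
proof (rule msum_cong)
  fix k assume "k \<in> {..<d}"
  then have k: "k < d" by simp
  have "M k = msum n n (\<lambda>j. lam k j \<cdot>\<^sub>m outer (v k j)) {..<n}"
    using spectral_decomposition[of "M k" n "v k" "lam k"] M v k by simp
  moreover have "\<forall>j\<in>{..<n}. lam k j \<cdot>\<^sub>m outer (v k j) \<in> carrier_mat n n"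
    using v k orthonormal_basis_carrier[of n "v k"] outer_carrier by simp
  ultimately show "kron (M k) (outer (u k)) =
      msum (n * d) (n * d) (\<lambda>j. kron (lam k j \<cdot>\<^sub>m outer (v k j)) (outer (u k))) {..<n}"
    using kron_msum_left[OF _ outer_carrier, of "{..<n}" _ n "u k" d] u k by simp
qed

lemma block_kron_decomposition:
  assumes T: "T \<in> carrier_mat (n * d) (n * d)" and u: "orthonormal_basis d u"
    and eig: "\<forall>i<n. \<forall>j<n. \<forall>k<d. blk d T i j *\<^sub>v u k = \<beta> i j k \<cdot>\<^sub>v u k"
  shows "T = msum (n * d) (n * d) (\<lambda>k. kron (mat n n (\<lambda>(i, j). \<beta> i j k)) (outer (u k))) {..<d}"
proof (rule eq_matI)
  fix p q assume "p < dim_row (msum (n * d) (n * d) (\<lambda>k. kron (mat n n (\<lambda>(i, j). \<beta> i j k)) (outer (u k))) {..<d})"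
    "q < dim_col (msum (n * d) (n * d) (\<lambda>k. kron (mat n n (\<lambda>(i, j). \<beta> i j k)) (outer (u k))) {..<d})"
  then have p: "p < n * d" and q: "q < n * d" by (auto simp: msum_def)
  define i a j b where "i = p div d" "a = p mod d" "j = q div d" "b = q mod d"
  have idx: "i < n" "a < d" "j < n" "b < d" "p = i * d + a" "q = j * d + b"
    using index_mult_decomp[OF p] index_mult_decomp[OF q] unfolding i_a_j_b_def by simp_all
  have "T $$ (p, q) = blk d T i j $$ (a, b)" using idx by (simp add: blk_def)
  also have "\<dots> = msum d d (\<lambda>k. \<beta> i j k \<cdot>\<^sub>m outer (u k)) {..<d} $$ (a, b)"
    using spectral_decomposition[of "blk d T i j" d u "\<beta> i j"] u eig idx by (simp add: blk_def)
  also have "\<dots> = (\<Sum>k<d. kron (mat n n (\<lambda>(i, j). \<beta> i j k)) (outer (u k)) $$ (p, q))"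
    unfolding msum_def using idx(2,4)
  proof (simp, intro sum.cong refl)
    fix k assume "k \<in> {..<d}"
    then have "u k \<in> carrier_vec d" using orthonormal_basis_carrier[OF u] by simp
    then show "(\<beta> i j k \<cdot>\<^sub>m outer (u k)) $$ (a, b) = kron (mat n n (\<lambda>(i, j). \<beta> i j k)) (outer (u k)) $$ (p, q)"
      using idx index_kron[OF _ outer_carrier, of "mat n n (\<lambda>(i, j). \<beta> i j k)" n n] by simp
  qed
  finally show "T $$ (p, q) = msum (n * d) (n * d) (\<lambda>k. kron (mat n n (\<lambda>(i, j). \<beta> i j k)) (outer (u k))) {..<d} $$ (p, q)"
    using p q by (simp add: msum_def)
qed (use T in \<open>auto simp: msum_def\<close>)

theorem theorem1:
  fixes n d :: nat and T :: "complex mat"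
    and u :: "nat \<Rightarrow> complex vec" and \<beta> :: "nat \<Rightarrow> nat \<Rightarrow> nat \<Rightarrow> complex"
  assumes "n \<ge> 1" and "d \<ge> 1"
    and T: "T \<in> carrier_mat (n*d) (n*d)"
    and normal: "\<forall>i<n. \<forall>j<n. normal_mat (blk d T i j)"
    and commute: "\<forall>i<n. \<forall>j<n. \<forall>i'<n. \<forall>j'<n. blk d T i j * blk d T i' j' = blk d T i' j' * blk d T i j"
    and u: "orthonormal_basis d u"
    and eig: "\<forall>i<n. \<forall>j<n. \<forall>k<d. blk d T i j *\<^sub>v u k = \<beta> i j k \<cdot>\<^sub>v u k"
  defines "M \<equiv> \<lambda>k. mat n n (\<lambda>(i,j). \<beta> i j k)"
  shows "T = msum (n*d) (n*d) (\<lambda>k. kron (M k) (outer (u k))) {..<d}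
    \<and> (separable n d T \<longleftrightarrow> psd T)
    \<and> (psd T \<longleftrightarrow> (\<forall>k<d. psd (M k)))
    \<and> (separable n d T \<longrightarrow>
           (\<forall>lam v. (\<forall>k<d. orthonormal_basis n (v k) \<and>
                        (\<forall>j<n. M k *\<^sub>v v k j = lam k j \<cdot>\<^sub>v v k j))
             \<longrightarrow> T = msum (n*d) (n*d) (\<lambda>(k,j). kron (lam k j \<cdot>\<^sub>m outer (v k j)) (outer (u k)))
                        ({..<d} \<times> {..<n})
               \<and> (\<forall>k<d. \<forall>j<n. psd (lam k j \<cdot>\<^sub>m outer (v k j)) \<and> psd (outer (u k)))))"
proof -
  have M: "\<forall>k<d. M k \<in> carrier_mat n n" by (simp add: M_def)
  have uc: "\<forall>k<d. u k \<in> carrier_vec d" using orthonormal_basis_carrier[OF u] by blast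
  have decomp: "T = msum (n*d) (n*d) (\<lambda>k. kron (M k) (outer (u k))) {..<d}"
    unfolding M_def using block_kron_decomposition[OF T u eig] .
  have psd_iff: "psd T \<longleftrightarrow> (\<forall>k<d. psd (M k))"
    using psd_kron_outer_sum_iff[OF u M] decomp by simp
  have sep_iff: "separable n d T \<longleftrightarrow> psd T"
  proof
    assume "psd T"
    then show "separable n d T"
      unfolding separable_def using decomp psd_iff M psd_outer uc outer_carrier
      by (intro conjI exI[of _ d] exI[of _ M] exI[of _ "\<lambda>k. outer (u k)"]) auto
  qed (simp add: separable_def)
  have refined: "T = msum (n*d) (n*d) (\<lambda>(k,j). kron (lam k j \<cdot>\<^sub>m outer (v k j)) (outer (u k))) ({..<d} \<times> {..<n})
      \<and> (\<forall>k<d. \<forall>j<n. psd (lam k j \<cdot>\<^sub>m outer (v k j)) \<and> psd (outer (u k)))"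
    if "psd T" and v: "\<forall>k<d. orthonormal_basis n (v k) \<and> (\<forall>j<n. M k *\<^sub>v v k j = lam k j \<cdot>\<^sub>v v k j)"
    for lam v
  proof -
    have "Im (lam k j) = 0 \<and> Re (lam k j) \<ge> 0" if "k < d" "j < n" for k j
      using psd_eigenvalue_nonneg[of "M k" n "v k j"] \<open>psd T\<close> psd_iff M v that
        orthonormal_basis_carrier[of n "v k" j] unfolding orthonormal_basis_def by auto
    then show ?thesis
      using decomp kron_outer_sum_spectral_refinement[OF M uc v] psd_smult_outer psd_outer by auto
  qed
  show ?thesis using decomp sep_iff psd_iff refined unfolding separable_def by blast
qed

end
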